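(* There exists a pairwise-intersecting double-interval society with $8$ voters and approval number $3$. On the other hand, every double-$8$ string has diameter at least $3$, so every society obtained from a double-$8$ string (by the construction below) has approval number at least $4$.
   Context: A double-interval society consists of a finite set of $n$ voters, each voter $v$ having an approval set $A_v\subseteq\mathbb{R}$ that is the union of two disjoint bounded closed intervals; it is pairwise-intersecting if $A_u\cap A_v\ne\emptyset$ for all voters $u,v$. The approval number of the society is the maximum over $p\in\mathbb{R}$ of the number of voters $v$ with $p\in A_v$. A double-$n$ string is a string of length $2n$ over $n$ symbols with each symbol appearing exactly twice; the distance between two distinct symbols is the minimum absolute difference of positions of an occurrence of each, and the diameter is the maximum of these distances over all pairs of distinct symbols. From a double-$n$ string of diameter $d$ one builds a society by letting each symbol be a voter and assigning to each of the $2n$ entries a closed interval, all of equal width, placed in the order of the string with spacing such that each interval overlaps exactly the intervals of the $d$ entries on either side of it; such a society is pairwise-intersecting and has approval number $d+1$. *)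

theory Defs
  imports Complex_Main
begin

definition double_interval :: "real set \<Rightarrow> bool" where
  "double_interval S \<longleftrightarrow>
     (\<exists>a b c d. a \<le> b \<and> c \<le> d \<and> {a..b} \<inter> {c..d} = {} \<and> S = {a..b} \<union> {c..d})"

definition double_interval_society :: "nat \<Rightarrow> (nat \<Rightarrow> real set) \<Rightarrow> bool" where
  "double_interval_society n A \<longleftrightarrow> (\<forall>v<n. double_interval (A v))"

definition pairwise_intersecting :: "nat \<Rightarrow> (nat \<Rightarrow> real set) \<Rightarrow> bool" where
  "pairwise_intersecting n A \<longleftrightarrow> (\<forall>u<n. \<forall>v<n. A u \<inter> A v \<noteq> {})"

definition approval_number :: "nat \<Rightarrow> (nat \<Rightarrow> real set) \<Rightarrow> nat" where
  "approval_number n A = Max ((\<lambda>p. card {v. v < n \<and> p \<in> A v}) ` UNIV)"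

definition double_string :: "nat \<Rightarrow> nat list \<Rightarrow> bool" where
  "double_string n s \<longleftrightarrow> length s = 2 * n \<and> set s \<subseteq> {..<n} \<and> (\<forall>a<n. count_list s a = 2)"

definition sym_dist :: "nat list \<Rightarrow> nat \<Rightarrow> nat \<Rightarrow> nat" where
  "sym_dist s a b = Min {nat \<bar>int i - int j\<bar> | i j. i < length s \<and> j < length s \<and> s ! i = a \<and> s ! j = b}"

definition diameter :: "nat \<Rightarrow> nat list \<Rightarrow> nat" where
  "diameter n s = Max {sym_dist s a b | a b. a < n \<and> b < n \<and> a \<noteq> b}"

text \<open>A placement realizing the construction for a string s of diameter d: entry i gets the
  closed interval [x i, x i + w] (equal widths), placed in order, such that the intervals of
  entries i < j overlap exactly when j - i \<le> d.\<close>
definition valid_placement :: "nat list \<Rightarrow> nat \<Rightarrow> (nat \<Rightarrow> real) \<Rightarrow> real \<Rightarrow> bool" where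
  "valid_placement s d x w \<longleftrightarrow> w > 0 \<and>
     (\<forall>i j. i < j \<and> j < length s \<longrightarrow> x i < x j) \<and>
     (\<forall>i j. i < j \<and> j < length s \<longrightarrow> ({x i..x i + w} \<inter> {x j..x j + w} \<noteq> {} \<longleftrightarrow> j - i \<le> d))"

definition string_society :: "nat list \<Rightarrow> (nat \<Rightarrow> real) \<Rightarrow> real \<Rightarrow> nat \<Rightarrow> real set" where
  "string_society s x w v = (\<Union>i\<in>{i. i < length s \<and> s ! i = v}. {x i..x i + w})"

end

theory Submission imports Defs begin

text \<open>The society for the first claim has integer endpoints, so a point is approved by a voter
  only if its floor is; the approval counts therefore need only be checked at the integers
  \<open>0..17\<close>.

  For the string part, let \<open>a\<close> be the symbol at position \<open>0\<close> and \<open>p\<close> its second position.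
  If all distances are at most \<open>d\<close>, each of the \<open>n - 1\<close> other symbols occurs within distance
  \<open>d\<close> of position \<open>0\<close> or \<open>p\<close>, hence in one of the three windows of \<open>d + 1\<close> consecutive
  positions ending at \<open>d\<close>, \<open>p\<close> and \<open>p + d\<close>, each of which also contains \<open>a\<close>. So some window
  carries at least \<open>(n + 2) / 3\<close> distinct symbols, i.e. \<open>4\<close> when \<open>n = 8\<close>. A window has at most
  \<open>d + 1\<close> entries, which forces \<open>d \<ge> 3\<close>, and in the interval construction the intervals
  of a window all contain the left endpoint of its last interval.\<close>

lemma approval_count_le: "card {v. v < (n::nat) \<and> p \<in> A v} \<le> n"
  using card_mono[of "{..<n}" "{v. v < n \<and> p \<in> A v}"] by auto

lemma finite_approval_counts: "finite (range (\<lambda>p. card {v. v < (n::nat) \<and> p \<in> A v}))"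
  by (rule finite_subset[of _ "{..n}"]) (auto simp: approval_count_le)

lemma approval_count_le_approval_number:
  "card {v. v < (n::nat) \<and> p \<in> A v} \<le> approval_number n A"
  unfolding approval_number_def by (rule Max_ge[OF finite_approval_counts]) simp

lemma approval_number_eqI:
  assumes "\<And>p. card {v. v < (n::nat) \<and> p \<in> A v} \<le> m" and "card {v. v < n \<and> q \<in> A v} = m"
  shows "approval_number n A = m"
  unfolding approval_number_def
  by (rule Max_eqI[OF finite_approval_counts]) (use assms in \<open>auto intro: sym\<close>)

definition int_double_interval :: "int \<times> int \<times> int \<times> int \<Rightarrow> real set" where
  "int_double_interval q =
     (case q of (a, b, c, e) \<Rightarrow> {of_int a..of_int b} \<union> {of_int c..of_int e})"

definition covers :: "int \<times> int \<times> int \<times> int \<Rightarrow> int \<Rightarrow> bool" where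
  "covers q k \<longleftrightarrow> (case q of (a, b, c, e) \<Rightarrow> a \<le> k \<and> k \<le> b \<or> c \<le> k \<and> k \<le> e)"

lemma of_int_mem_int_double_interval: "of_int k \<in> int_double_interval q \<longleftrightarrow> covers q k"
  unfolding int_double_interval_def covers_def by (cases q) auto

lemma covers_floor: "p \<in> int_double_interval q \<Longrightarrow> covers q \<lfloor>p\<rfloor>"
  unfolding int_double_interval_def covers_def
  by (cases q) (auto simp: le_floor_iff floor_le_iff)

lemma double_interval_int_double_interval:
  "a \<le> b \<Longrightarrow> b < c \<Longrightarrow> c \<le> e \<Longrightarrow> double_interval (int_double_interval (a, b, c, e))"
  unfolding double_interval_def int_double_interval_def
  by (rule exI[of _ "of_int a"], rule exI[of _ "of_int b"], rule exI[of _ "of_int c"],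
      rule exI[of _ "of_int e"]) auto

definition example_intervals :: "(int \<times> int \<times> int \<times> int) list" where
  "example_intervals = [(9,10,13,16), (0,2,6,9), (3,3,7,11), (5,6,10,12), (2,5,15,15),
     (0,4,12,14), (1,1,11,17), (4,7,16,16)]"

definition example_society :: "nat \<Rightarrow> real set" where
  "example_society v = int_double_interval (example_intervals ! v)"

lemma example_intervals_shape:
  "\<forall>(a, b, c, e) \<in> set example_intervals. 0 \<le> a \<and> a \<le> b \<and> b < c \<and> c \<le> e \<and> e \<le> 17"
  unfolding example_intervals_def by simp

lemma Collect_less_eq_set_filter_upt: "{v. v < n \<and> P v} = set (filter P [0..<n])"
  by auto

lemma example_counts_small:
  "\<forall>k \<in> set [0..17]. length (filter (\<lambda>v. covers (example_intervals ! v) k) [0..<8]) \<le> 3"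
  by code_simp

lemma example_common_integers:
  "\<forall>u \<in> set [0..<8]. \<forall>v \<in> set [0..<8]. \<exists>k \<in> set [0..17].
     covers (example_intervals ! u) k \<and> covers (example_intervals ! v) k"
  by code_simp

lemma example_approvers_of_5: "filter (\<lambda>v. covers (example_intervals ! v) 5) [0..<8] = [3, 4, 7]"
  by code_simp

lemma example_intervals_nth_shape:
  assumes "v < 8" and "example_intervals ! v = (a, b, c, e)"
  shows "0 \<le> a \<and> a \<le> b \<and> b < c \<and> c \<le> e \<and> e \<le> 17"
proof -
  have "example_intervals ! v \<in> set example_intervals"
    using \<open>v < 8\<close> by (intro nth_mem) (simp add: example_intervals_def)
  then show ?thesis using example_intervals_shape unfolding assms(2) by fastforce
qed

lemma example_uncovered_integer:
  assumes "v < 8" and "k < 0 \<or> 17 < k"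
  shows "\<not> covers (example_intervals ! v) k"
proof -
  obtain a b c e where q: "example_intervals ! v = (a, b, c, e)" by (cases "example_intervals ! v")
  with assms show ?thesis
    using example_intervals_nth_shape[OF \<open>v < 8\<close> q] unfolding q covers_def by auto
qed

lemma example_integer_count_le: "card {v. v < 8 \<and> covers (example_intervals ! v) k} \<le> 3"
proof (cases "0 \<le> k \<and> k \<le> 17")
  case True
  have "card {v. v < 8 \<and> covers (example_intervals ! v) k}
      = length (filter (\<lambda>v. covers (example_intervals ! v) k) [0..<8])"
    unfolding Collect_less_eq_set_filter_upt by (rule distinct_card) simp
  also have "\<dots> \<le> 3" using example_counts_small True by simp
  finally show ?thesis .
next
  case False
  then have "{v. v < 8 \<and> covers (example_intervals ! v) k} = {}"
    using example_uncovered_integer by auto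
  then show ?thesis by (metis card.empty zero_le)
qed

lemma example_count_le: "card {v. v < 8 \<and> p \<in> example_society v} \<le> 3"
proof -
  have "card {v. v < 8 \<and> p \<in> example_society v}
      \<le> card {v. v < 8 \<and> covers (example_intervals ! v) \<lfloor>p\<rfloor>}"
    by (rule card_mono) (auto simp: example_society_def covers_floor)
  also have "\<dots> \<le> 3" by (rule example_integer_count_le)
  finally show ?thesis .
qed

lemma example_society_properties:
  "double_interval_society 8 example_society \<and> pairwise_intersecting 8 example_society
     \<and> approval_number 8 example_society = 3"
proof (intro conjI)
  show "double_interval_society 8 example_society"
    unfolding double_interval_society_def
  proof (intro allI impI)
    fix v :: nat assume "v < 8"
    obtain a b c e where q: "example_intervals ! v = (a, b, c, e)" by (cases "example_intervals ! v")
    then show "double_interval (example_society v)"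
      using example_intervals_nth_shape[OF \<open>v < 8\<close> q] double_interval_int_double_interval
      by (simp add: example_society_def)
  qed
  show "pairwise_intersecting 8 example_society"
    unfolding pairwise_intersecting_def
  proof (intro allI impI)
    fix u v :: nat assume "u < 8" "v < 8"
    then have "u \<in> set [0..<8]" "v \<in> set [0..<8]" by simp_all
    then obtain k where "covers (example_intervals ! u) k" "covers (example_intervals ! v) k"
      using example_common_integers by blast
    then have "of_int k \<in> example_society u \<inter> example_society v"
      by (simp add: example_society_def of_int_mem_int_double_interval)
    then show "example_society u \<inter> example_society v \<noteq> {}" by blast
  qed
  have "{v. v < 8 \<and> (5::real) \<in> example_society v} = {3, 4, 7}"
    using of_int_mem_int_double_interval[of 5]
    by (simp add: example_society_def Collect_less_eq_set_filter_upt example_approvers_of_5)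
  then show "approval_number 8 example_society = 3"
    by (intro approval_number_eqI[of _ _ _ 5] example_count_le) simp
qed

definition window :: "nat list \<Rightarrow> nat \<Rightarrow> nat \<Rightarrow> nat set" where
  "window s d k = nth s ` {k - d..k}"

lemma nth_mem_window: "i \<le> k \<Longrightarrow> k \<le> i + d \<Longrightarrow> s ! i \<in> window s d k"
  unfolding window_def by auto

lemma card_window_le: "card (window s d k) \<le> d + 1"
  unfolding window_def using card_image_le[of "{k - d..k}" "nth s"] by simp

lemma double_string_nth_less: "double_string n s \<Longrightarrow> i < length s \<Longrightarrow> s ! i < n"
  unfolding double_string_def using nth_mem by blast

lemma double_string_mem: "double_string n s \<Longrightarrow> a < n \<Longrightarrow> a \<in> set s"
  unfolding double_string_def using count_notin by fastforce

lemma double_string_card_positions: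
  assumes "double_string n s" and "a < n"
  shows "card {i. i < length s \<and> s ! i = a} = 2"
proof -
  have "card {i. i < length s \<and> s ! i = a} = card {i. i < length s \<and> a = s ! i}"
    by (metis (full_types))
  also have "\<dots> = count_list s a"
    by (simp add: count_list_eq_length_filter length_filter_conv_card)
  finally show ?thesis using assms by (simp add: double_string_def)
qed

lemma sym_dist_attained:
  assumes "a \<in> set s" and "b \<in> set s"
  shows "\<exists>i<length s. \<exists>j<length s. s ! i = a \<and> s ! j = b \<and> sym_dist s a b = nat \<bar>int i - int j\<bar>"
proof -
  let ?D = "{nat \<bar>int i - int j\<bar> | i j. i < length s \<and> j < length s \<and> s ! i = a \<and> s ! j = b}"
  have "?D \<subseteq> (\<lambda>(i, j). nat \<bar>int i - int j\<bar>) ` ({..<length s} \<times> {..<length s})"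
    by auto
  then have "finite ?D" by (rule finite_subset) simp
  moreover have "?D \<noteq> {}" using assms by (auto simp: in_set_conv_nth)
  ultimately have "Min ?D \<in> ?D" by (rule Min_in)
  then show ?thesis unfolding sym_dist_def by blast
qed

lemma sym_dist_le_diameter:
  assumes "a < n" and "b < n" and "a \<noteq> b"
  shows "sym_dist s a b \<le> diameter n s"
proof -
  have "{sym_dist s a b | a b. a < n \<and> b < n \<and> a \<noteq> b}
      \<subseteq> (\<lambda>(a, b). sym_dist s a b) ` ({..<n} \<times> {..<n})"
    by auto
  then have "finite {sym_dist s a b | a b. a < n \<and> b < n \<and> a \<noteq> b}"
    by (rule finite_subset) simp
  then show ?thesis
    unfolding diameter_def by (rule Max_ge) (use assms in blast)
qed

lemma double_string_window_bound:
  assumes ds: "double_string n s" and "0 < n"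
    and diam: "diameter n s \<le> d"
    and small: "\<forall>k<length s. card (window s d k) \<le> m"
  shows "n + 2 \<le> 3 * m"
proof -
  have len: "length s = 2 * n" using ds by (simp add: double_string_def)
  define a where "a = s ! 0"
  have "a < n" unfolding a_def using ds len \<open>0 < n\<close> by (simp add: double_string_nth_less)
  have "card {i. i < length s \<and> s ! i = a} = 2"
    using double_string_card_positions[OF ds \<open>a < n\<close>] .
  then obtain p q where pq: "{i. i < length s \<and> s ! i = a} = {p, q}"
    by (meson card_2_iff)
  have "0 \<in> {p, q}" unfolding pq[symmetric] using len \<open>0 < n\<close> by (simp add: a_def)
  with pq obtain p where pos_a: "{i. i < length s \<and> s ! i = a} = {0, p}"
    by blast
  then have "p < length s" "s ! p = a" by blast+
  define L where "L = length s - 1"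
  define k0 where "k0 = min d L"
  define k2 where "k2 = min (p + d) L"
  have "p \<le> L" using \<open>p < length s\<close> by (simp add: L_def)
  have windows: "k0 < length s" "p < length s" "k2 < length s"
    using \<open>p < length s\<close> by (auto simp: k0_def k2_def L_def)
  have in_windows: "s ! j \<in> window s d k0 \<or> s ! j \<in> window s d p \<or> s ! j \<in> window s d k2"
    if j_le: "j \<le> L" and i_pos: "i = 0 \<or> i = p" and close_ij: "i \<le> j + d" "j \<le> i + d" for i j
  proof -
    consider "i = 0" | "i = p" "j \<le> p" | "i = p" "p < j" using i_pos by fastforce
    then show ?thesis
    proof cases
      case 1
      then have "j \<le> k0" "k0 \<le> j + d" using j_le close_ij by (simp_all add: k0_def)
      then show ?thesis using nth_mem_window by blast
    next
      case 2
      then show ?thesis using close_ij nth_mem_window[of j p d s] by simp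
    next
      case 3
      then have "j \<le> k2" "k2 \<le> j + d" using j_le close_ij by (simp_all add: k2_def)
      then show ?thesis using nth_mem_window by blast
    qed
  qed
  have a_in: "a \<in> window s d k0" "a \<in> window s d p" "a \<in> window s d k2"
  proof -
    show "a \<in> window s d k0" unfolding a_def by (rule nth_mem_window) (simp_all add: k0_def)
    show "a \<in> window s d p" unfolding \<open>s ! p = a\<close>[symmetric] by (rule nth_mem_window) simp_all
    show "a \<in> window s d k2" unfolding \<open>s ! p = a\<close>[symmetric]
      by (rule nth_mem_window) (use \<open>p \<le> L\<close> in \<open>simp_all add: k2_def\<close>)
  qed
  have others: "{..<n} - {a} \<subseteq>
      (window s d k0 - {a}) \<union> (window s d p - {a}) \<union> (window s d k2 - {a})"
  proof
    fix b assume "b \<in> {..<n} - {a}"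
    then have "b < n" "b \<noteq> a" by auto
    obtain i j where ij: "i < length s" "j < length s" "s ! i = a" "s ! j = b"
        "sym_dist s a b = nat \<bar>int i - int j\<bar>"
      using sym_dist_attained double_string_mem[OF ds] \<open>a < n\<close> \<open>b < n\<close> by meson
    have "sym_dist s a b \<le> d"
      using sym_dist_le_diameter[OF \<open>a < n\<close> \<open>b < n\<close> \<open>b \<noteq> a\<close>[symmetric]] diam
      by (rule order_trans)
    then have "nat \<bar>int i - int j\<bar> \<le> d" by (simp only: ij(5))
    then have "i \<le> j + d" "j \<le> i + d" by arith+
    moreover have "i = 0 \<or> i = p" using pos_a ij by blast
    moreover have "j \<le> L" using ij(2) by (simp add: L_def)
    ultimately show "b \<in> (window s d k0 - {a}) \<union> (window s d p - {a}) \<union> (window s d k2 - {a})"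
      using in_windows \<open>b \<noteq> a\<close> ij(4) by blast
  qed
  have fin: "finite (window s d k)" for k unfolding window_def by simp
  have piece: "card (window s d k - {a}) \<le> m - 1" if "k < length s" "a \<in> window s d k" for k
    using small that fin by (simp add: card_Diff_singleton diff_le_mono)
  have "n - 1 = card ({..<n} - {a})" using \<open>a < n\<close> by simp
  also have "\<dots> \<le> card ((window s d k0 - {a}) \<union> (window s d p - {a}) \<union> (window s d k2 - {a}))"
    using others fin by (intro card_mono) auto
  also have "\<dots> \<le> card (window s d k0 - {a}) + card (window s d p - {a}) + card (window s d k2 - {a})"
    by (rule order_trans[OF card_Un_le add_right_mono[OF card_Un_le]])
  also have "\<dots> \<le> 3 * (m - 1)"
    using piece[OF windows(1) a_in(1)] piece[OF windows(2) a_in(2)] piece[OF windows(3) a_in(3)]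
    by linarith
  finally have "n - 1 \<le> 3 * (m - 1)" .
  moreover have "1 \<le> m" using small windows(2) a_in(2) fin card_0_eq[of "window s d p"] by fastforce
  ultimately show ?thesis using \<open>0 < n\<close> by linarith
qed

lemma double_string_8_crowded_window:
  assumes "double_string 8 s" and "diameter 8 s \<le> d"
  shows "\<exists>k<length s. 4 \<le> card (window s d k)"
  using double_string_window_bound[OF assms(1) _ assms(2), of 3] by force

lemma valid_placement_window_common_point:
  assumes vp: "valid_placement s d x w" and "k < length s" and "i \<in> {k - d..k}"
  shows "x k \<in> {x i..x i + w}"
proof (cases "i = k")
  case True
  then show ?thesis using vp by (simp add: valid_placement_def)
next
  case False
  with assms(3) have "i < k" "k - i \<le> d" by auto
  with vp \<open>k < length s\<close> have "x i < x k" "{x i..x i + w} \<inter> {x k..x k + w} \<noteq> {}"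
    unfolding valid_placement_def by blast+
  then show ?thesis by auto
qed

lemma window_approvers:
  assumes "double_string n s" and "valid_placement s d x w" and "k < length s"
  shows "window s d k \<subseteq> {v. v < n \<and> x k \<in> string_society s x w v}"
proof
  fix v assume "v \<in> window s d k"
  then obtain i where i: "i \<in> {k - d..k}" "v = s ! i" unfolding window_def by blast
  then have "i < length s" using \<open>k < length s\<close> by simp
  then show "v \<in> {v. v < n \<and> x k \<in> string_society s x w v}"
    using i double_string_nth_less[OF assms(1)] valid_placement_window_common_point[OF assms(2,3) i(1)]
    unfolding string_society_def by blast
qed

lemma double_string_8_diameter_ge_3:
  assumes "double_string 8 s"
  shows "3 \<le> diameter 8 s"
proof (rule ccontr)
  assume "\<not> 3 \<le> diameter 8 s"
  then obtain k where "4 \<le> card (window s 2 k)"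
    using double_string_8_crowded_window[OF assms, of 2] by auto
  then show False using card_window_le[of s 2 k] by simp
qed

lemma string_society_approval_number_ge_4:
  assumes ds: "double_string 8 s" and vp: "valid_placement s (diameter 8 s) x w"
  shows "4 \<le> approval_number 8 (string_society s x w)"
proof -
  obtain k where "k < length s" "4 \<le> card (window s (diameter 8 s) k)"
    using double_string_8_crowded_window[OF ds order_refl] by blast
  moreover have "finite {v. v < 8 \<and> x k \<in> string_society s x w v}" by simp
  ultimately have "4 \<le> card {v. v < 8 \<and> x k \<in> string_society s x w v}"
    using window_approvers[OF ds vp] card_mono order_trans by metis
  then show ?thesis using approval_count_le_approval_number order_trans by blast
qed

theorem proposition5p1:
  shows "(\<exists>A. double_interval_society 8 A \<and> pairwise_intersecting 8 A \<and> approval_number 8 A = 3)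
    \<and> (\<forall>s. double_string 8 s \<longrightarrow> diameter 8 s \<ge> 3)
    \<and> (\<forall>s x w. double_string 8 s \<and> valid_placement s (diameter 8 s) x w \<longrightarrow>
          approval_number 8 (string_society s x w) \<ge> 4)"
  using example_society_properties double_string_8_diameter_ge_3
    string_society_approval_number_ge_4 by blast

end
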